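(* Let $n$ be a positive integer and $\lambda$ an infinite cardinal. For every $d$-feebly compact shift-continuous $T_1$-topology $\tau$ on the semilattice $\exp_n\lambda$, the subset $\exp_n\lambda\setminus\exp_{n-1}\lambda$ is dense in $(\exp_n\lambda,\tau)$.
   Context: For a positive integer $n$ and a cardinal $\lambda$, $\exp_n\lambda=\{A\subseteq\lambda\colon |A|\leqslant n\}$, regarded as a semilattice under the operation $\cap$ (so $\exp_0\lambda=\{\varnothing\}$). A topology $\tau$ on a semilattice $S$ is shift-continuous if the semilattice operation $S\times S\to S$ is separately continuous, i.e. $(S,\tau)$ is a semitopological semilattice. A topological space is $d$-feebly compact if every discrete family of open subsets of it is finite. *)

theory Defs
  imports "HOL-Analysis.Analysis"
begin

definition exp_set :: "nat \<Rightarrow> 'a set \<Rightarrow> 'a set set" where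
  "exp_set n L = {A. A \<subseteq> L \<and> finite A \<and> card A \<le> n}"

definition shift_continuous :: "'a set topology \<Rightarrow> bool" where
  "shift_continuous X \<longleftrightarrow>
     (\<forall>a\<in>topspace X. continuous_map X X (\<lambda>x. a \<inter> x) \<and> continuous_map X X (\<lambda>x. x \<inter> a))"

definition discrete_family :: "'a topology \<Rightarrow> 'a set set \<Rightarrow> bool" where
  "discrete_family X F \<longleftrightarrow>
     (\<forall>x\<in>topspace X. \<exists>V. openin X V \<and> x \<in> V \<and>
        (\<forall>U\<in>F. \<forall>W\<in>F. U \<inter> V \<noteq> {} \<and> W \<inter> V \<noteq> {} \<longrightarrow> U = W))"

definition d_feebly_compact :: "'a topology \<Rightarrow> bool" where
  "d_feebly_compact X \<longleftrightarrow>
     (\<forall>F. (\<forall>U\<in>F. openin X U) \<and> discrete_family X F \<longrightarrow> finite F)"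

end

theory Submission
  imports Defs "HOL-Library.Nat_Bijection"
begin

text \<open>
  For a finite point a, the preimage under y \<mapsto> y \<inter> a of the complement of the finite, hence
  closed, set of proper subsets of a is an open neighbourhood of a consisting of supersets of a.
  Consequently a point of maximal cardinality in an open set is isolated; in particular every
  point of cardinality n is. If an isolated point x had fewer than n elements, extending x by
  infinitely many pairwise disjoint blocks of fresh elements of L would give infinitely many
  isolated points of cardinality n whose singletons form a discrete family: near x only {x} is
  met, a proper superset p of x has a neighbourhood of supersets of p, all containing a fixed
  element of p - x, and the non-supersets of x form an open set missing all of them. This
  contradicts d-feeble compactness, so every nonempty open set contains a point of cardinality n.
\<close>

lemma exp_set_iff: "A \<in> exp_set n L \<longleftrightarrow> A \<subseteq> L \<and> finite A \<and> card A \<le> n"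
  by (simp add: exp_set_def)

lemma infinite_disjoint_blocks:
  assumes "infinite S"
  obtains B :: "nat \<Rightarrow> 'a set"
  where "\<And>i. B i \<subseteq> S" "\<And>i. finite (B i)" "\<And>i. card (B i) = m" "disjoint_family B"
proof -
  obtain f :: "nat \<Rightarrow> 'a" where "inj f" "range f \<subseteq> S"
    using assms infinite_countable_subset by blast
  define g where "g = f \<circ> prod_encode"
  have g: "inj g" "range g \<subseteq> S"
    using \<open>inj f\<close> \<open>range f \<subseteq> S\<close> inj_prod_encode[of UNIV] by (auto simp: g_def inj_compose)
  show thesis
  proof
    fix i j :: nat
    show "g ` ({i} \<times> {..<m}) \<subseteq> S" using g by auto
    show "finite (g ` ({i} \<times> {..<m}))" by simp
    show "card (g ` ({i} \<times> {..<m})) = m"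
      using g by (simp add: card_image inj_on_subset card_cartesian_product)
    show "disjoint_family (\<lambda>i. g ` ({i} \<times> {..<m}))"
      using g by (auto simp: disjoint_family_on_def image_Int[symmetric])
  qed
qed

lemma openin_supersets_nbhd:
  assumes "t1_space X" "shift_continuous X" "a \<in> topspace X" "finite a"
  obtains V where "openin X V" "a \<in> V" "\<And>y. y \<in> V \<Longrightarrow> a \<subseteq> y"
proof -
  define D where "D = {y \<in> topspace X. y \<subseteq> a} - {a}"
  have "finite D"
    unfolding D_def using \<open>finite a\<close> by (auto intro: finite_subset[of _ "Pow a"])
  then have "closedin X D"
    using \<open>t1_space X\<close> unfolding t1_space_closedin_finite D_def by auto
  then have "openin X (topspace X - D)"
    by auto
  moreover have "continuous_map X X (\<lambda>y. y \<inter> a)"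
    using assms unfolding shift_continuous_def by auto
  ultimately have "openin X {y \<in> topspace X. y \<inter> a \<in> topspace X - D}"
    by (rule openin_continuous_map_preimage[rotated])
  moreover have "a \<in> {y \<in> topspace X. y \<inter> a \<in> topspace X - D}"
    using assms(3) by (auto simp: D_def)
  ultimately show thesis
    by (rule that) (auto simp: D_def)
qed

lemma openin_not_supersets:
  assumes "t1_space X" "shift_continuous X" "a \<in> topspace X"
  shows "openin X {y \<in> topspace X. \<not> a \<subseteq> y}"
proof -
  have "continuous_map X X (\<lambda>y. y \<inter> a)"
    using assms unfolding shift_continuous_def by auto
  then have "closedin X {y \<in> topspace X. y \<inter> a \<in> {a}}"
    using closedin_t1_singleton[OF assms(1,3)] by (rule closedin_continuous_map_preimage)
  then have "openin X (topspace X - {y \<in> topspace X. y \<inter> a \<in> {a}})"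
    by auto
  moreover have "topspace X - {y \<in> topspace X. y \<inter> a \<in> {a}} = {y \<in> topspace X. \<not> a \<subseteq> y}"
    by auto
  ultimately show ?thesis by simp
qed

lemma openin_singleton_of_card_maximal:
  assumes "t1_space X" "shift_continuous X" "openin X T" "z \<in> T"
    and finite: "\<And>y. y \<in> topspace X \<Longrightarrow> finite y"
    and maximal: "\<And>y. y \<in> T \<Longrightarrow> card y \<le> card z"
  shows "openin X {z}"
proof -
  have "z \<in> topspace X"
    using assms(3,4) openin_subset by blast
  then obtain V where V: "openin X V" "z \<in> V" "\<And>y. y \<in> V \<Longrightarrow> z \<subseteq> y"
    using openin_supersets_nbhd assms(1,2) finite by metis
  have "T \<inter> V = {z}"
  proof (intro equalityI subsetI)
    fix y assume y: "y \<in> T \<inter> V"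
    then have "finite y"
      using finite openin_subset[OF assms(3)] by blast
    with y V(3) maximal show "y \<in> {z}"
      by (metis IntD1 IntD2 card_seteq singletonI)
  qed (use V assms(4) in auto)
  then show ?thesis
    using assms(3) V(1) by (metis openin_Int)
qed

lemma openin_singleton_of_card_eq:
  assumes "topspace X = exp_set n L" "t1_space X" "shift_continuous X"
    and "z \<in> topspace X" "card z = n"
  shows "openin X {z}"
  by (rule openin_singleton_of_card_maximal[OF assms(2,3) openin_topspace assms(4)])
    (use assms(1,5) in \<open>auto simp: exp_set_iff\<close>)

lemma discrete_family_disjoint_extensions:
  assumes "t1_space X" "shift_continuous X"
    and finite: "\<And>y. y \<in> topspace X \<Longrightarrow> finite y"
    and "x \<in> topspace X" "openin X {x}"
    and M: "\<And>i. M i \<in> topspace X" "\<And>i. x \<subset> M i"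
    and disjoint: "disjoint_family (\<lambda>i. M i - x)"
  shows "discrete_family X (range (\<lambda>i. {M i}))"
  unfolding discrete_family_def
proof
  fix p assume p: "p \<in> topspace X"
  let ?meets_one = "\<lambda>V. \<forall>U\<in>range (\<lambda>i. {M i}). \<forall>W\<in>range (\<lambda>i. {M i}).
                          U \<inter> V \<noteq> {} \<and> W \<inter> V \<noteq> {} \<longrightarrow> U = W"
  consider "p = x" | "x \<subset> p" | "\<not> x \<subseteq> p" by blast
  then show "\<exists>V. openin X V \<and> p \<in> V \<and> ?meets_one V"
  proof cases
    case 1
    have "{M i} \<inter> {x} = {}" for i using M(2) by auto
    then have "?meets_one {x}" by auto
    then show ?thesis using 1 assms(5) by blast
  next
    case 2
    then obtain c where c: "c \<in> p" "c \<notin> x" by blast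
    obtain V where V: "openin X V" "p \<in> V" "\<And>y. y \<in> V \<Longrightarrow> p \<subseteq> y"
      using openin_supersets_nbhd assms(1,2) p finite by metis
    have "?meets_one V"
    proof (intro ballI impI)
      fix U W assume "U \<in> range (\<lambda>i. {M i})" "W \<in> range (\<lambda>i. {M i})"
        and meet: "U \<inter> V \<noteq> {} \<and> W \<inter> V \<noteq> {}"
      then obtain i j where ij: "U = {M i}" "W = {M j}" by auto
      then have "c \<in> M i - x" "c \<in> M j - x"
        using meet V(3) c by auto
      then have "i = j" using disjoint by (auto simp: disjoint_family_on_def)
      then show "U = W" using ij by simp
    qed
    then show ?thesis using V by blast
  next
    case 3
    have "{M i} \<inter> {y \<in> topspace X. \<not> x \<subseteq> y} = {}" for i using M(2) by auto
    then have "?meets_one {y \<in> topspace X. \<not> x \<subseteq> y}" by auto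
    then show ?thesis
      using openin_not_supersets[OF assms(1,2,4)] p 3 by blast
  qed
qed

lemma isolated_point_card_eq:
  assumes "topspace X = exp_set n L" "infinite L" "t1_space X" "shift_continuous X"
    and "d_feebly_compact X" "x \<in> topspace X" "openin X {x}"
  shows "card x = n"
proof (rule ccontr)
  assume "card x \<noteq> n"
  have x: "x \<subseteq> L" "finite x" "card x < n"
    using assms(1,6) \<open>card x \<noteq> n\<close> by (auto simp: exp_set_iff)
  have finite: "\<And>y. y \<in> topspace X \<Longrightarrow> finite y"
    using assms(1) by (simp add: exp_set_iff)
  have "infinite (L - x)"
    using assms(2) x(2) by simp
  obtain B where B: "\<And>i::nat. B i \<subseteq> L - x" "\<And>i. finite (B i)" "\<And>i. card (B i) = n - card x"
    and disjoint: "disjoint_family B"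
    using infinite_disjoint_blocks[OF \<open>infinite (L - x)\<close>] by blast
  define M where "M i = x \<union> B i" for i
  have card_M: "card (M i) = n" for i
  proof -
    have "x \<inter> B i = {}" using B(1) by blast
    then show ?thesis
      using card_Un_disjoint[OF x(2) B(2)] B(3) x(3) by (simp add: M_def)
  qed
  have M_x: "M i - x = B i" for i
    using B(1) by (auto simp: M_def)
  have M_in: "M i \<in> topspace X" for i
  proof -
    have "M i \<subseteq> L" "finite (M i)"
      using B(1,2) x(1,2) by (auto simp: M_def)
    then show ?thesis
      using card_M assms(1) by (simp add: exp_set_iff)
  qed
  have proper: "x \<subset> M i" for i
    using card_M[of i] x(3) by (auto simp: M_def)
  have "disjoint_family (\<lambda>i. M i - x)"
    using disjoint by (simp add: M_x)
  with assms(3,4) finite assms(6,7) M_in proper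
  have "discrete_family X (range (\<lambda>i. {M i}))"
    by (rule discrete_family_disjoint_extensions)
  moreover have "\<forall>U\<in>range (\<lambda>i. {M i}). openin X U"
    using openin_singleton_of_card_eq[OF assms(1,3,4) M_in card_M] by auto
  moreover have "inj (\<lambda>i. {M i})"
  proof
    fix i j assume "{M i} = {M j}"
    then have "B i = B j" using M_x by (metis singleton_inject)
    moreover have "B i \<noteq> {}"
      using B(3) x(3) by (metis card.empty zero_less_diff less_irrefl)
    ultimately show "i = j" using disjoint by (auto simp: disjoint_family_on_def)
  qed
  then have "infinite (range (\<lambda>i. {M i}))"
    using finite_imageD infinite_UNIV_nat by blast
  ultimately show False
    using assms(5) unfolding d_feebly_compact_def by blast
qed

theorem proposition2:
  fixes n :: nat and L :: "'a set" and X :: "'a set topology"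
  assumes "n \<ge> 1"
    and "infinite L"
    and "topspace X = exp_set n L"
    and "t1_space X"
    and "shift_continuous X"
    and "d_feebly_compact X"
  shows "X closure_of (exp_set n L - exp_set (n - 1) L) = topspace X"
proof -
  have "\<exists>z\<in>T. z \<in> exp_set n L - exp_set (n - 1) L" if "openin X T" "x \<in> T" for T x
  proof -
    have finite: "\<And>y. y \<in> topspace X \<Longrightarrow> finite y"
      using assms(3) by (simp add: exp_set_iff)
    have "\<forall>y. y \<in> T \<longrightarrow> card y < Suc n"
      using openin_subset[OF \<open>openin X T\<close>] assms(3) by (auto simp: exp_set_iff)
    then obtain z where z: "z \<in> T" "\<And>y. y \<in> T \<Longrightarrow> card y \<le> card z"
      using ex_has_greatest_nat[of "\<lambda>y. y \<in> T" x card] \<open>x \<in> T\<close> by blast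
    have "z \<in> topspace X"
      using z(1) openin_subset[OF \<open>openin X T\<close>] by blast
    moreover have "openin X {z}"
      using openin_singleton_of_card_maximal[OF assms(4,5) \<open>openin X T\<close> z(1) finite z(2)] .
    ultimately have "card z = n"
      by (rule isolated_point_card_eq[OF assms(3,2,4,5,6)])
    moreover have "z \<in> exp_set n L"
      using \<open>z \<in> topspace X\<close> assms(3) by simp
    ultimately have "z \<in> exp_set n L - exp_set (n - 1) L"
      using assms(1) by (simp add: exp_set_iff)
    with z(1) show ?thesis ..
  qed
  then show ?thesis
    by (auto simp: closure_of_def)
qed

end
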